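(* Let $p>3$ be a prime. Then $$\sum_{k=0}^{[p/4]}\binom{4k}{2k}\frac1{18^k}\equiv2\Big(\frac6p\Big)-\Big(\frac3p\Big)\pmod p.$$
   Context: $[x]$ is the greatest integer $\le x$; $(\frac{\cdot}{p})$ is the Legendre symbol. *)

theory Defs
  imports "HOL-Number_Theory.Number_Theory"
begin

definition rat_cong :: "rat \<Rightarrow> rat \<Rightarrow> int \<Rightarrow> bool" where
  "rat_cong x y m \<longleftrightarrow>
     (\<exists>a b::int. b \<noteq> 0 \<and> coprime b m \<and> m dvd a \<and> x - y = of_int a / of_int b)"

end

theory Submission
  imports Defs
begin

text \<open>Write \<open>p = 2n + 1\<close>. Modulo \<open>p\<close> one has \<open>C(4k,2k) \<equiv> 16^k C(n,2k)\<close>, so the sum becomes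
  \<open>\<Sum> C(n,2k) (8/9)^k = 3^-n E\<close>, where \<open>E\<close> is the rational part of
  \<open>(3 + \<surd>8)^n = (1 + \<surd>2)^(p-1)\<close>. As \<open>C(p-1,j) \<equiv> (-1)^j\<close>, this rational part is congruent to
  \<open>1 + 2 + \<dots> + 2^n = 2^(n+1) - 1\<close>, and Euler's criterion turns \<open>3^-n (2 \<cdot> 2^n - 1)\<close> into
  \<open>2(6/p) - (3/p)\<close>.\<close>

lemma rat_cong_of_int: "[a = b] (mod m) \<Longrightarrow> rat_cong (of_int a) (of_int b) m"
  unfolding rat_cong_def
  by (rule exI[of _ "a - b"], rule exI[of _ 1]) (simp add: cong_iff_dvd_diff)

lemma rat_cong_div_of_int:
  assumes "rat_cong x y m" "coprime b m" "b \<noteq> 0"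
  shows "rat_cong (x / of_int b) (y / of_int b) m"
proof -
  obtain a c where "c \<noteq> 0" "coprime c m" "m dvd a" "x - y = of_int a / of_int c"
    using assms(1) unfolding rat_cong_def by blast
  moreover from this have "x / of_int b - y / of_int b = of_int a / of_int (c * b)"
    by (simp flip: diff_divide_distrib)
  ultimately show ?thesis
    unfolding rat_cong_def using assms(2,3) by (intro exI[of _ a] exI[of _ "c * b"]) auto
qed

lemma rat_cong_add:
  assumes "rat_cong x y m" "rat_cong x' y' m"
  shows "rat_cong (x + x') (y + y') m"
proof -
  obtain a b where ab: "b \<noteq> 0" "coprime b m" "m dvd a" "x - y = of_int a / of_int b"
    using assms(1) unfolding rat_cong_def by blast
  obtain a' b' where ab': "b' \<noteq> 0" "coprime b' m" "m dvd a'" "x' - y' = of_int a' / of_int b'"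
    using assms(2) unfolding rat_cong_def by blast
  have "x + x' - (y + y') = of_int a / of_int b + of_int a' / of_int b'"
    using ab ab' by (simp add: add_diff_add)
  also have "\<dots> = of_int (a * b' + a' * b) / of_int (b * b')"
    using ab ab' by (simp add: add_frac_eq)
  finally show ?thesis
    unfolding rat_cong_def using ab ab' by (intro exI[of _ "a * b' + a' * b"] exI[of _ "b * b'"]) auto
qed

lemma rat_cong_of_int_div:
  assumes "[a = c * b] (mod m)" "coprime b m" "b \<noteq> 0"
  shows "rat_cong (of_int a / of_int b) (of_int c) m"
  using rat_cong_div_of_int[OF rat_cong_of_int[OF assms(1)] assms(2,3)] assms(3) by simp

lemma rat_cong_trans [trans]:
  assumes "rat_cong x y m" "rat_cong y z m"
  shows "rat_cong x z m"
  using rat_cong_add[OF assms] unfolding rat_cong_def by simp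

lemma rat_cong_sum:
  assumes "finite A" "\<And>i. i \<in> A \<Longrightarrow> rat_cong (f i) (g i) m"
  shows "rat_cong (\<Sum>i\<in>A. f i) (\<Sum>i\<in>A. g i) m"
  using assms
proof (induction A rule: finite_induct)
  case empty
  then show ?case
    using rat_cong_of_int[of 0 0 m] by simp
next
  case (insert i A)
  then show ?case
    by (simp add: rat_cong_add)
qed

definition even_binomial_sum :: "'a::comm_ring_1 \<Rightarrow> 'a \<Rightarrow> nat \<Rightarrow> 'a" where
  "even_binomial_sum x y m = (\<Sum>k\<le>m div 2. of_nat (m choose (2 * k)) * x ^ (m - 2 * k) * y ^ k)"

lemma of_int_even_binomial_sum [simp]:
  "of_int (even_binomial_sum x y m) = even_binomial_sum (of_int x) (of_int y) m"
  by (simp add: even_binomial_sum_def)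

lemma sum_atMost_even_part:
  fixes f :: "nat \<Rightarrow> 'a::comm_monoid_add"
  assumes "\<And>k. odd k \<Longrightarrow> f k = 0"
  shows "(\<Sum>k\<le>m. f k) = (\<Sum>j\<le>m div 2. f (2 * j))"
proof -
  have "(\<Sum>j\<le>m div 2. f (2 * j)) = sum f ((*) 2 ` {..m div 2})"
    by (simp add: sum.reindex inj_on_def)
  also have "\<dots> = (\<Sum>k\<le>m. f k)"
  proof (rule sum.mono_neutral_left)
    show "\<forall>k\<in>{..m} - (*) 2 ` {..m div 2}. f k = 0"
    proof
      fix k assume k: "k \<in> {..m} - (*) 2 ` {..m div 2}"
      have "odd k"
      proof
        assume "even k"
        then have "k = 2 * (k div 2)" "k div 2 \<in> {..m div 2}"
          using k by (auto intro: div_le_mono)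
        then show False
          using k by blast
      qed
      then show "f k = 0"
        by (rule assms)
    qed
  qed auto
  finally show ?thesis ..
qed

lemma even_binomial_sum_sqrt:
  fixes x s :: "'a::comm_ring_1"
  assumes "s ^ 2 = y"
  shows "(x + s) ^ m + (x - s) ^ m = 2 * even_binomial_sum x y m"
proof -
  have "(x + s) ^ m + (x - s) ^ m = (\<Sum>k\<le>m. of_nat (m choose k) * (s ^ k + (- s) ^ k) * x ^ (m - k))"
    using binomial_ring[of s x m] binomial_ring[of "- s" x m]
    by (simp add: add.commute sum.distrib algebra_simps)
  also have "\<dots> = (\<Sum>j\<le>m div 2. 2 * (of_nat (m choose (2 * j)) * x ^ (m - 2 * j) * y ^ j))"
  proof (subst sum_atMost_even_part)
    have "s ^ (2 * j) = y ^ j" "(- s) ^ (2 * j) = y ^ j" for j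
      by (simp_all add: power_mult assms)
    then show "(\<Sum>j\<le>m div 2. of_nat (m choose (2 * j)) * (s ^ (2 * j) + (- s) ^ (2 * j)) * x ^ (m - 2 * j))
        = (\<Sum>j\<le>m div 2. 2 * (of_nat (m choose (2 * j)) * x ^ (m - 2 * j) * y ^ j))"
      by (simp add: algebra_simps)
  qed simp
  finally show ?thesis
    by (simp add: even_binomial_sum_def sum_distrib_left mult_ac)
qed

lemma even_binomial_sum_double:
  fixes x y :: int
  shows "even_binomial_sum x y (2 * m) = even_binomial_sum (x ^ 2 + y) (4 * x ^ 2 * y) m"
proof -
  define s where "s = csqrt (of_int y)"
  let ?x = "of_int x :: complex"
  have s2: "s ^ 2 = of_int y"
    by (simp add: s_def)
  have t2: "(2 * ?x * s) ^ 2 = of_int (4 * x ^ 2 * y)"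
    using s2 by (simp add: power_mult_distrib)
  have squares: "(?x + s) ^ 2 = of_int (x ^ 2 + y) + 2 * ?x * s"
                "(?x - s) ^ 2 = of_int (x ^ 2 + y) - 2 * ?x * s"
    using s2 by (simp_all add: power2_eq_square algebra_simps)
  have "2 * of_int (even_binomial_sum x y (2 * m)) = (?x + s) ^ (2 * m) + (?x - s) ^ (2 * m)"
    using even_binomial_sum_sqrt[OF s2] by simp
  also have "\<dots> = (of_int (x ^ 2 + y) + 2 * ?x * s) ^ m + (of_int (x ^ 2 + y) - 2 * ?x * s) ^ m"
    by (simp add: power_mult squares)
  also have "\<dots> = 2 * of_int (even_binomial_sum (x ^ 2 + y) (4 * x ^ 2 * y) m)"
    using even_binomial_sum_sqrt[OF t2] by simp
  finally show ?thesis
    by (simp only: mult_cancel_left of_int_eq_iff) simp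
qed

lemma even_binomial_sum_eq_power_mult:
  fixes x y :: "'a::field"
  assumes "x \<noteq> 0"
  shows "even_binomial_sum x y m = x ^ m * (\<Sum>k\<le>m div 2. of_nat (m choose (2 * k)) * (y / x ^ 2) ^ k)"
  unfolding even_binomial_sum_def sum_distrib_left
proof (rule sum.cong)
  fix k assume "k \<in> {..m div 2}"
  then have "x ^ m = x ^ (m - 2 * k) * (x ^ 2) ^ k"
    by (simp flip: power_add power_mult)
  then show "of_nat (m choose (2 * k)) * x ^ (m - 2 * k) * y ^ k
           = x ^ m * (of_nat (m choose (2 * k)) * (y / x ^ 2) ^ k)"
    using assms by (simp add: power_divide field_simps)
qed simp

lemma coprime_less_prime:
  fixes p a :: nat
  assumes "prime p" "0 < a" "a < p"
  shows "coprime (int a) (int p)"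
proof -
  have "\<not> int p dvd int a"
    using assms by (auto dest: zdvd_imp_le)
  then have "coprime (int p) (int a)"
    using assms(1) by (intro prime_imp_coprime) auto
  then show ?thesis
    by (simp add: coprime_commute)
qed

lemma binomial_pred_prime_cong:
  fixes p k :: nat
  assumes "prime p" "k < p"
  shows "[int ((p - 1) choose k) = (-1) ^ k] (mod int p)"
  using assms(2)
proof (induction k)
  case 0
  then show ?case by simp
next
  case (Suc k)
  have "p dvd (p choose Suc k)"
    using Suc.prems assms(1) by (intro dvd_choose_prime) auto
  then have "[int (p choose Suc k) = 0] (mod int p)"
    by (simp add: cong_0_iff)
  moreover have "p choose Suc k = ((p - 1) choose k) + ((p - 1) choose Suc k)"
    using assms(1) prime_gt_0_nat binomial_Suc_Suc[of "p - 1" k] by simp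
  ultimately have "[int ((p - 1) choose k) + int ((p - 1) choose Suc k) = 0] (mod int p)"
    by simp
  then have "[int ((p - 1) choose Suc k) = - int ((p - 1) choose k)] (mod int p)"
    by (simp add: cong_iff_dvd_diff add.commute)
  also have "[- int ((p - 1) choose k) = - ((-1) ^ k)] (mod int p)"
    using Suc by (simp add: cong_minus_minus_iff)
  finally show ?case
    by simp
qed

lemma central_binomial_cong:
  fixes p n m :: nat
  assumes "prime p" "p = 2 * n + 1" "m \<le> n"
  shows "[int (2 * m choose m) = (-4) ^ m * int (n choose m)] (mod int p)"
  using assms(3)
proof (induction m)
  case 0
  then show ?case by simp
next
  case (Suc m)
  have central: "Suc m * (2 * Suc m choose Suc m) = 2 * (2 * m + 1) * (2 * m choose m)"
    by (metis Suc_eq_plus1 Suc_times_binomial Suc_times_binomial_add add_2_eq_Suc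
        add_mult_distrib mult_Suc_right nat_mult_1 one_add_one)
  have absorb: "Suc m * (n choose Suc m) = (n - m) * (n choose m)"
    using binomial_absorption[of m n] binomial_absorb_comp[of n m] by simp
  have "int (Suc m) * int (2 * Suc m choose Suc m) = 2 * (2 * int m + 1) * int (2 * m choose m)"
    using arg_cong[OF central, of int] by (simp only: of_nat_mult of_nat_add of_nat_numeral of_nat_1)
  also have "[\<dots> = -4 * (int n - int m) * ((-4) ^ m * int (n choose m))] (mod int p)"
  proof (rule cong_mult)
    show "[2 * (2 * int m + 1) = -4 * (int n - int m)] (mod int p)"
    proof -
      have "2 * (2 * int m + 1) - (-4 * (int n - int m)) = 2 * int p"
        using assms(2) by simp
      then show ?thesis
        by (metis cong_iff_dvd_diff dvd_triv_right)
    qed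
    show "[int (2 * m choose m) = (-4) ^ m * int (n choose m)] (mod int p)"
      using Suc by simp
  qed
  also have "-4 * (int n - int m) * ((-4) ^ m * int (n choose m))
           = (-4) ^ Suc m * ((int n - int m) * int (n choose m))"
    by (simp add: algebra_simps)
  also have "(int n - int m) * int (n choose m) = int (Suc m) * int (n choose Suc m)"
    using arg_cong[OF absorb, of int] Suc.prems by (simp only: of_nat_mult of_nat_diff)
  also have "(-4) ^ Suc m * (int (Suc m) * int (n choose Suc m))
           = int (Suc m) * ((-4) ^ Suc m * int (n choose Suc m))"
    by (rule mult.left_commute)
  finally have "[int (Suc m) * int (2 * Suc m choose Suc m)
                = int (Suc m) * ((-4) ^ Suc m * int (n choose Suc m))] (mod int p)" .
  moreover have "coprime (int (Suc m)) (int p)"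
    using Suc.prems assms(2) by (intro coprime_less_prime[OF assms(1)]) auto
  ultimately show ?case
    by (rule cong_mult_lcancel[THEN iffD1, rotated])
qed

lemma even_binomial_sum_pred_prime_cong:
  fixes x y :: int
  assumes "prime p"
  shows "[even_binomial_sum x y (p - 1) = (\<Sum>k\<le>(p - 1) div 2. x ^ (p - 1 - 2 * k) * y ^ k)] (mod int p)"
  unfolding even_binomial_sum_def
proof (rule cong_sum)
  fix k assume "k \<in> {..(p - 1) div 2}"
  then have "2 * k < p"
    using prime_gt_0_nat[OF assms] by auto
  then have binomial: "[int ((p - 1) choose (2 * k)) = 1] (mod int p)"
    using binomial_pred_prime_cong[OF assms, of "2 * k"] by simp
  show "[of_nat ((p - 1) choose (2 * k)) * x ^ (p - 1 - 2 * k) * y ^ k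
            = x ^ (p - 1 - 2 * k) * y ^ k] (mod int p)"
    using cong_mult[OF cong_mult[OF binomial cong_refl] cong_refl] by simp
qed

lemma Legendre_6_3_cong:
  fixes p :: nat
  assumes "prime p" "p > 3"
  shows "[(2 * Legendre 6 (int p) - Legendre 3 (int p)) * 3 ^ (p div 2) = 2 ^ Suc (p div 2) - 1] (mod int p)"
proof -
  let ?n = "p div 2"
  have "odd p"
    using assms by (simp add: prime_odd_nat)
  then have half: "(p - 1) div 2 = ?n" "p - 1 = 2 * ?n"
    by presburger+
  have euler: "[Legendre a (int p) = a ^ ?n] (mod int p)" for a
    using euler_criterion[OF assms(1)] assms(2) half by simp
  have "[3 ^ (p - 1) = 1] (mod p)"
    using assms by (intro fermat_theorem) (auto dest: dvd_imp_le)
  then have fermat: "[(3::int) ^ (2 * ?n) = 1] (mod int p)"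
    using cong_int_iff[of "3 ^ (p - 1)" 1 p] half by simp
  have "[(2 * Legendre 6 (int p) - Legendre 3 (int p)) * 3 ^ ?n = (2 * 6 ^ ?n - 3 ^ ?n) * 3 ^ ?n] (mod int p)"
    by (intro cong_mult cong_diff euler cong_refl)
  also have "(2 * 6 ^ ?n - 3 ^ ?n) * 3 ^ ?n = 2 * 2 ^ ?n * (3::int) ^ (2 * ?n) - 3 ^ (2 * ?n)"
  proof -
    have "(6::int) ^ ?n = 2 ^ ?n * 3 ^ ?n"
      by (simp flip: power_mult_distrib)
    moreover have "(3::int) ^ (2 * ?n) = 3 ^ ?n * 3 ^ ?n"
      by (simp only: mult_2 power_add)
    ultimately show ?thesis
      by (simp only: left_diff_distrib mult.assoc)
  qed
  also have "[\<dots> = 2 * 2 ^ ?n * 1 - 1] (mod int p)"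
    by (intro cong_diff cong_mult fermat cong_refl)
  finally show ?thesis
    by simp
qed

lemma sum_central_binomial_even_cong:
  fixes b :: int
  assumes "prime p" "p = 2 * n + 1" "coprime b (int p)" "b \<noteq> 0"
  shows "rat_cong (\<Sum>k\<le>n div 2. of_nat ((4 * k) choose (2 * k)) / of_int b ^ k)
                  (\<Sum>k\<le>n div 2. of_nat (n choose (2 * k)) * (16 / of_int b) ^ k) (int p)"
proof (rule rat_cong_sum)
  fix k assume "k \<in> {..n div 2}"
  then have "[int ((4 * k) choose (2 * k)) = 16 ^ k * int (n choose (2 * k))] (mod int p)"
    using central_binomial_cong[OF assms(1,2), of "2 * k"] by (simp add: power_mult)
  from rat_cong_div_of_int[OF rat_cong_of_int[OF this], of "b ^ k"] assms(3,4)
  show "rat_cong (of_nat ((4 * k) choose (2 * k)) / of_int b ^ k)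
                 (of_nat (n choose (2 * k)) * (16 / of_int b) ^ k) (int p)"
    by (simp add: power_divide mult.commute)
qed simp

lemma even_binomial_sum_3_8_cong:
  assumes "prime p" "p = 2 * n + 1"
  shows "[even_binomial_sum (3::int) 8 n = 2 ^ Suc n - 1] (mod int p)"
proof -
  have "even_binomial_sum 3 8 n = even_binomial_sum (1::int) 2 (p - 1)"
    using even_binomial_sum_double[of 1 2 n] assms(2) by simp
  also have "[\<dots> = (\<Sum>k\<le>n. 2 ^ k)] (mod int p)"
    using even_binomial_sum_pred_prime_cong[OF assms(1), of 1 2] assms(2) by simp
  also have "(\<Sum>k\<le>n. 2 ^ k) = (2::int) ^ Suc n - 1"
    using sum_gp_basic[of "2::int" n] by simp
  finally show ?thesis .
qed

theorem corollary2p11: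
  fixes p :: nat
  assumes "prime p" and "p > 3"
  shows "rat_cong (\<Sum>k=0..p div 4. of_nat ((4*k) choose (2*k)) / 18^k)
                  (of_int (2 * Legendre 6 (int p) - Legendre 3 (int p)))
                  (int p)"
proof -
  define n where "n = p div 2"
  have "odd p"
    using assms by (simp add: prime_odd_nat)
  then have p: "p = 2 * n + 1" "p div 4 = n div 2"
    unfolding n_def by presburger+
  have coprime: "coprime ((2::int) ^ i * 3 ^ j) (int p)" for i j
    using coprime_less_prime[OF assms(1), of 2] coprime_less_prime[OF assms(1), of 3] assms(2)
    by simp
  have "rat_cong (\<Sum>k=0..p div 4. of_nat ((4*k) choose (2*k)) / 18^k)
                 (\<Sum>k\<le>n div 2. of_nat (n choose (2 * k)) * (16 / 18) ^ k) (int p)"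
    using sum_central_binomial_even_cong[OF assms(1) p(1), of 18] coprime[of 1 2]
    by (simp add: atLeast0AtMost p(2))
  also have "(\<Sum>k\<le>n div 2. of_nat (n choose (2 * k)) * (16 / 18) ^ k)
           = (of_int (even_binomial_sum 3 8 n) / of_int (3 ^ n) :: rat)"
    using even_binomial_sum_eq_power_mult[of "3::rat" 8 n] by simp
  also have "rat_cong \<dots> (of_int (2 * Legendre 6 (int p) - Legendre 3 (int p))) (int p)"
  proof (rule rat_cong_of_int_div)
    show "[even_binomial_sum 3 8 n = (2 * Legendre 6 (int p) - Legendre 3 (int p)) * 3 ^ n] (mod int p)"
      using even_binomial_sum_3_8_cong[OF assms(1) p(1)] Legendre_6_3_cong[OF assms]
      unfolding n_def by (metis cong_sym cong_trans)
  qed (use coprime[of 0 n] in simp_all)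
  finally show ?thesis .
qed

end
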